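(* Let $n\ge1$ and $\beta\in\mathbb C$, $\beta\ne0$. Let $\tilde t^{(r)}_{ij}$ ($1\le i,j\le n$, $r\ge1$) be elements of a unital associative $\mathbb C$-algebra, put $\tilde t^{(0)}_{ij}=\delta_{ij}$ and $\tilde T_{ij}(u)=\sum_{r\ge0}\tilde t^{(r)}_{ij}u^{-r}$. Then the relations $$\left(u+\frac\beta u-v-\frac\beta v\right)[\tilde T_{ij}(u),\tilde T_{kl}(v)]=\tilde T_{kj}(u)\tilde T_{il}(v)-\tilde T_{kj}(v)\tilde T_{il}(u)\qquad(1\le i,j,k,l\le n)$$ hold if and only if for all $r,s\ge1$ and all $i,j,k,l$ $$[\tilde t^{(r)}_{ij},\tilde t^{(s)}_{kl}]=\sum_{\substack{p,m\ge0\\ m-s\le p\le r-m-1}}\beta^m\left(\tilde t^{(r-p-m-1)}_{kj}\tilde t^{(p+s-m)}_{il}-\tilde t^{(p+s-m)}_{kj}\tilde t^{(r-p-m-1)}_{il}\right).$$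
   Context: The first system is the defining relation system (in generating-series form) of the algebra $OY_\beta(\mathfrak{gl}_n)$ attached to Dickson polynomials; it is equivalent to the matrix relation $R^\beta(u,v)\tilde T_1(u)\tilde T_2(v)=\tilde T_2(v)\tilde T_1(u)R^\beta(u,v)$ with $R^\beta(u,v)=I-\frac{1}{u+\beta/u-v-\beta/v}P$, $P$ the permutation operator on $\mathbb C^n\otimes\mathbb C^n$. The identity of series is understood by comparing coefficients of monomials $u^{a}v^{b}$. *)

theory Defs
  imports Complex_Main
begin

text \<open>A unital associative complex algebra is a ring_1 'a together with a unital ring
  homomorphism sc from the complex numbers into the centre of 'a; the scalar action is
  c . x = sc c * x.\<close>
definition calg_struct :: "(complex \<Rightarrow> 'a::ring_1) \<Rightarrow> bool" where
  "calg_struct sc \<longleftrightarrow> sc 1 = 1 \<and> (\<forall>a b. sc (a + b) = sc a + sc b)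
     \<and> (\<forall>a b. sc (a * b) = sc a * sc b) \<and> (\<forall>a x. sc a * x = x * sc a)"

definition commut :: "'a::ring \<Rightarrow> 'a \<Rightarrow> 'a" where
  "commut x y = x * y - y * x"

text \<open>Coefficients with the convention t^(0)_ij = delta_ij, and t^(r) = 0 for r < 0
  (integer index: coefficient of u^(-r) in T_ij(u)).\<close>
definition tc :: "(nat \<Rightarrow> nat \<Rightarrow> nat \<Rightarrow> 'a::ring_1) \<Rightarrow> nat \<Rightarrow> nat \<Rightarrow> int \<Rightarrow> 'a" where
  "tc t i j r = (if r < 0 then 0 else if r = 0 then (if i = j then 1 else 0) else t i j (nat r))"

text \<open>Two-variable series in u, v are encoded by their coefficient functions:
  F a b is the coefficient of u^(-a) v^(-b) (a, b integers).\<close>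
type_synonym 'a ser2 = "int \<Rightarrow> int \<Rightarrow> 'a"

text \<open>f(u) g(v) and f(v) g(u) for one-variable series f, g (coefficient of w^(-r) at r).\<close>
definition ser_uv :: "(int \<Rightarrow> 'a::ring_1) \<Rightarrow> (int \<Rightarrow> 'a) \<Rightarrow> 'a ser2" where
  "ser_uv f g = (\<lambda>a b. f a * g b)"
definition ser_vu :: "(int \<Rightarrow> 'a::ring_1) \<Rightarrow> (int \<Rightarrow> 'a) \<Rightarrow> 'a ser2" where
  "ser_vu f g = (\<lambda>a b. f b * g a)"

definition mul_u :: "'a ser2 \<Rightarrow> 'a ser2" where "mul_u F = (\<lambda>a b. F (a + 1) b)"
definition mul_uinv :: "'a ser2 \<Rightarrow> 'a ser2" where "mul_uinv F = (\<lambda>a b. F (a - 1) b)"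
definition mul_v :: "'a ser2 \<Rightarrow> 'a ser2" where "mul_v F = (\<lambda>a b. F a (b + 1))"
definition mul_vinv :: "'a ser2 \<Rightarrow> 'a ser2" where "mul_vinv F = (\<lambda>a b. F a (b - 1))"

definition sc_ser :: "'a::ring_1 \<Rightarrow> 'a ser2 \<Rightarrow> 'a ser2" where "sc_ser c F = (\<lambda>a b. c * F a b)"

definition comm_ser :: "(int \<Rightarrow> 'a::ring_1) \<Rightarrow> (int \<Rightarrow> 'a) \<Rightarrow> 'a ser2" where
  "comm_ser f g = (\<lambda>a b. commut (f a) (g b))"

end

theory Submission
  imports Defs
begin

text \<open>Put C(u, v) = [T_ij(u), T_kl(v)] and D(u, v) = T_kj(u) T_il(v) - T_kj(v) T_il(u).
  Since u + \<beta>/u - v - \<beta>/v = (u - v)(1 - \<beta> u^-1 v^-1), the relation reads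
  (u - v)(1 - \<beta> u^-1 v^-1) C = D. On series without nonnegative powers of u both factors are
  injective, with inverses given by the expansions 1/(u - v) = \<Sigma>_p v^p u^(-p-1) and
  1/(1 - \<beta> u^-1 v^-1) = \<Sigma>_m \<beta>^m u^-m v^-m. Hence the relation holds iff C is the series
  obtained by applying these expansions to D, whose coefficients are the stated sums.
  For the converse direction this series must also have no nonnegative powers of v; that
  holds because D is antisymmetric, so its coefficients cancel in pairs along each antidiagonal.\<close>

definition mul_u_sub_v :: "'a::ring_1 ser2 \<Rightarrow> 'a ser2" where
  "mul_u_sub_v F = (\<lambda>a b. F (a + 1) b - F a (b + 1))"

definition mul_1_sub_uv_inv :: "'a::ring_1 \<Rightarrow> 'a ser2 \<Rightarrow> 'a ser2" where
  "mul_1_sub_uv_inv c F = (\<lambda>a b. F a b - c * F (a - 1) (b - 1))"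

text \<open>Coefficients of F/(u - v) and of F/(1 - c u^-1 v^-1), expanded as above and truncated to the
  terms that survive when F has no positive (resp. nonnegative) powers of u.\<close>

definition div_u_sub_v :: "'a::ring_1 ser2 \<Rightarrow> 'a ser2" where
  "div_u_sub_v F = (\<lambda>a b. \<Sum>p<nat a. F (a - 1 - int p) (b + int p))"

definition div_1_sub_uv_inv :: "'a::ring_1 \<Rightarrow> 'a ser2 \<Rightarrow> 'a ser2" where
  "div_1_sub_uv_inv c F = (\<lambda>a b. \<Sum>m<nat a. c ^ m * F (a - int m) (b - int m))"

definition skew :: "'a::ring_1 ser2 \<Rightarrow> 'a ser2" where
  "skew P = (\<lambda>a b. P a b - P b a)"

lemma dickson_operator_factorization:
  "mul_u C a b + sc_ser c (mul_uinv C) a b - mul_v C a b - sc_ser c (mul_vinv C) a b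
     = mul_u_sub_v (mul_1_sub_uv_inv c C) a b"
  by (simp add: mul_u_def mul_uinv_def mul_v_def mul_vinv_def sc_ser_def
      mul_u_sub_v_def mul_1_sub_uv_inv_def algebra_simps)

lemma div_u_sub_v_nonpos_fst: "a \<le> 0 \<Longrightarrow> div_u_sub_v F a b = 0"
  by (simp add: div_u_sub_v_def)

lemma div_1_sub_uv_inv_nonpos_fst: "a \<le> 0 \<Longrightarrow> div_1_sub_uv_inv c F a b = 0"
  by (simp add: div_1_sub_uv_inv_def)

lemma div_u_sub_v_Suc:
  assumes "a \<ge> 0"
  shows "div_u_sub_v F (a + 1) b = F a b + div_u_sub_v F a (b + 1)"
proof -
  have "nat (a + 1) = Suc (nat a)" using assms by simp
  then show ?thesis
    unfolding div_u_sub_v_def by (simp only: sum.lessThan_Suc_shift) (simp add: algebra_simps)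
qed

lemma mul_u_sub_v_div_u_sub_v:
  assumes "\<And>a b. a < 0 \<Longrightarrow> F a b = 0"
  shows "mul_u_sub_v (div_u_sub_v F) = F"
proof (intro ext)
  fix a b
  show "mul_u_sub_v (div_u_sub_v F) a b = F a b"
  proof (cases "a \<ge> 0")
    case True
    then show ?thesis by (simp add: mul_u_sub_v_def div_u_sub_v_Suc)
  next
    case False
    then show ?thesis by (simp add: mul_u_sub_v_def div_u_sub_v_nonpos_fst assms)
  qed
qed

lemma mul_1_sub_uv_inv_div_1_sub_uv_inv:
  assumes "\<And>a b. a \<le> 0 \<Longrightarrow> F a b = 0"
  shows "mul_1_sub_uv_inv c (div_1_sub_uv_inv c F) = F"
proof (intro ext)
  fix a b
  show "mul_1_sub_uv_inv c (div_1_sub_uv_inv c F) a b = F a b"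
  proof (cases "a \<ge> 1")
    case True
    then have "nat a = Suc (nat (a - 1))" by simp
    then show ?thesis
      unfolding mul_1_sub_uv_inv_def div_1_sub_uv_inv_def
      by (simp only: sum.lessThan_Suc_shift) (simp add: sum_distrib_left mult.assoc algebra_simps)
  next
    case False
    then show ?thesis by (simp add: mul_1_sub_uv_inv_def div_1_sub_uv_inv_nonpos_fst assms)
  qed
qed

lemma mul_u_sub_v_inj:
  assumes "mul_u_sub_v F = mul_u_sub_v G" and "\<And>a b. a \<le> 0 \<Longrightarrow> F a b = G a b"
  shows "F = G"
proof -
  have "\<forall>b. F (int n) b = G (int n) b" for n
  proof (induction n)
    case (Suc n)
    show ?case
    proof
      fix b
      have "mul_u_sub_v F (int n) b = mul_u_sub_v G (int n) b"
        using assms(1) by simp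
      then show "F (int (Suc n)) b = G (int (Suc n)) b"
        using Suc.IH by (simp add: mul_u_sub_v_def add.commute)
    qed
  qed (simp add: assms(2))
  then show ?thesis
    by (metis assms(2) ext nonneg_int_cases linorder_linear)
qed

lemma mul_1_sub_uv_inv_inj:
  assumes "mul_1_sub_uv_inv c F = mul_1_sub_uv_inv c G" and "\<And>a b. a \<le> 0 \<Longrightarrow> F a b = G a b"
  shows "F = G"
proof -
  have "\<forall>b. F (int n) b = G (int n) b" for n
  proof (induction n)
    case (Suc n)
    show ?case
    proof
      fix b
      have "mul_1_sub_uv_inv c F (int (Suc n)) b = mul_1_sub_uv_inv c G (int (Suc n)) b"
        using assms(1) by simp
      then show "F (int (Suc n)) b = G (int (Suc n)) b"
        using Suc.IH by (simp add: mul_1_sub_uv_inv_def)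
    qed
  qed (simp add: assms(2))
  then show ?thesis
    by (metis assms(2) ext nonneg_int_cases linorder_linear)
qed

lemma div_u_sub_v_skew_diagonal:
  assumes "\<And>a b. a < 0 \<or> b < 0 \<Longrightarrow> P a b = 0"
  shows "div_u_sub_v (skew P) a 0 = 0"
proof -
  have "(\<Sum>p<nat a. P (int p) (a - 1 - int p)) = (\<Sum>p<nat a. P (a - 1 - int p) (int p))"
  proof (cases "a \<ge> 0")
    case True
    have "(\<Sum>p<nat a. P (int p) (a - 1 - int p))
        = (\<Sum>p<nat a. P (int (nat a - Suc p)) (a - 1 - int (nat a - Suc p)))"
      by (rule sum.nat_diff_reindex[symmetric])
    also have "\<dots> = (\<Sum>p<nat a. P (a - 1 - int p) (int p))"
      using True by (intro sum.cong) (auto simp: of_nat_diff algebra_simps)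
    finally show ?thesis .
  qed simp
  then show ?thesis by (simp add: div_u_sub_v_def skew_def sum_subtractf)
qed

lemma div_u_sub_v_shift:
  assumes "\<And>x. F x b = 0"
  shows "div_u_sub_v F (a + 1) b = div_u_sub_v F a (b + 1)"
  using assms by (cases "a \<ge> 0") (simp_all add: div_u_sub_v_Suc div_u_sub_v_nonpos_fst)

lemma div_u_sub_v_skew_nonpos_snd:
  assumes P: "\<And>a b. a < 0 \<or> b < 0 \<Longrightarrow> P a b = 0" and "b \<le> 0"
  shows "div_u_sub_v (skew P) a b = 0"
proof -
  have "div_u_sub_v (skew P) a (- int k) = div_u_sub_v (skew P) (a - int k) 0" for a k
  proof (induction k arbitrary: a)
    case (Suc k)
    have "div_u_sub_v (skew P) a (- int (Suc k)) = div_u_sub_v (skew P) (a - 1) (- int k)"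
      using div_u_sub_v_shift[of "skew P" "- int (Suc k)" "a - 1"] P by (simp add: skew_def)
    also have "\<dots> = div_u_sub_v (skew P) (a - int (Suc k)) 0"
      using Suc.IH by (simp add: algebra_simps)
    finally show ?case .
  qed simp
  from this[of a "nat (- b)"] show ?thesis
    using \<open>b \<le> 0\<close> div_u_sub_v_skew_diagonal[OF P] by simp
qed

lemma div_1_sub_uv_inv_div_u_sub_v_closed_form:
  assumes D: "\<And>a b. b < 0 \<Longrightarrow> D a b = 0"
  shows "div_1_sub_uv_inv c (div_u_sub_v D) (int r) (int s)
    = (\<Sum>(p, m) \<in> {(p, m). m \<le> p + s \<and> p + m + 1 \<le> r}.
         c ^ m * D (int (r - p - m - 1)) (int (p + s - m)))"
proof -
  define g where "g = (\<lambda>(p, m). c ^ m * D (int r - int m - 1 - int p) (int s - int m + int p))"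
  define T where "T = {(p, m). p + m + 1 \<le> r}"
  define S where "S = {(p, m). m \<le> p + s \<and> p + m + 1 \<le> r}"
  have "div_1_sub_uv_inv c (div_u_sub_v D) (int r) (int s) = (\<Sum>m<r. \<Sum>p<r - m. g (p, m))"
    unfolding div_1_sub_uv_inv_def div_u_sub_v_def g_def sum_distrib_left
    by (intro sum.cong) (auto simp: of_nat_diff algebra_simps)
  also have "\<dots> = (\<Sum>(m, p) \<in> Sigma {..<r} (\<lambda>m. {..<r - m}). g (p, m))"
    by (subst sum.Sigma) auto
  also have "\<dots> = sum g T"
    by (rule sum.reindex_bij_witness[where i=prod.swap and j=prod.swap]) (auto simp: T_def)
  also have "\<dots> = sum g S"
  proof (rule sum.mono_neutral_right)
    show "finite T"
      by (rule finite_subset[of _ "{..<r} \<times> {..<r}"]) (auto simp: T_def)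
    show "S \<subseteq> T"
      by (auto simp: S_def T_def)
    show "\<forall>x\<in>T - S. g x = 0"
    proof clarify
      fix p m
      assume "(p, m) \<in> T" "(p, m) \<notin> S"
      then have "int s - int m + int p < 0"
        by (auto simp: S_def T_def)
      then show "g (p, m) = 0"
        by (simp add: g_def D)
    qed
  qed
  also have "\<dots> = (\<Sum>(p, m) \<in> S. c ^ m * D (int (r - p - m - 1)) (int (p + s - m)))"
    by (intro sum.cong) (auto simp: S_def g_def of_nat_diff algebra_simps)
  finally show ?thesis
    unfolding S_def .
qed

lemma dickson_relation_iff_closed_form:
  fixes C P :: "'a::ring_1 ser2"
  assumes C: "\<And>a b. a \<le> 0 \<or> b \<le> 0 \<Longrightarrow> C a b = 0"
    and P: "\<And>a b. a < 0 \<or> b < 0 \<Longrightarrow> P a b = 0"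
  shows "mul_u_sub_v (mul_1_sub_uv_inv c C) = skew P \<longleftrightarrow>
    (\<forall>r s. r \<ge> 1 \<longrightarrow> s \<ge> 1 \<longrightarrow> C (int r) (int s)
       = (\<Sum>(p, m) \<in> {(p, m). m \<le> p + s \<and> p + m + 1 \<le> r}.
            c ^ m * skew P (int (r - p - m - 1)) (int (p + s - m))))"
    (is "_ \<longleftrightarrow> ?closed")
proof -
  define K where "K = div_1_sub_uv_inv c (div_u_sub_v (skew P))"
  have skew_P: "skew P a b = 0" if "a < 0 \<or> b < 0" for a b
    using that P by (auto simp: skew_def)
  have K_solves: "mul_u_sub_v (mul_1_sub_uv_inv c K) = skew P"
    unfolding K_def using skew_P
    by (simp add: mul_1_sub_uv_inv_div_1_sub_uv_inv div_u_sub_v_nonpos_fst mul_u_sub_v_div_u_sub_v)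
  have H_boundary: "div_u_sub_v (skew P) a b = 0" if "b \<le> 0" for a b
    using P that by (rule div_u_sub_v_skew_nonpos_snd)
  have K_boundary: "K a b = 0" if "a \<le> 0 \<or> b \<le> 0" for a b
    using that
  proof
    assume "a \<le> 0"
    then show ?thesis
      unfolding K_def by (rule div_1_sub_uv_inv_nonpos_fst)
  next
    assume "b \<le> 0"
    then have "div_u_sub_v (skew P) (a - int m) (b - int m) = 0" for m
      by (intro H_boundary) simp
    then show ?thesis
      by (simp add: K_def div_1_sub_uv_inv_def)
  qed
  have K_closed: "K (int r) (int s)
      = (\<Sum>(p, m) \<in> {(p, m). m \<le> p + s \<and> p + m + 1 \<le> r}.
           c ^ m * skew P (int (r - p - m - 1)) (int (p + s - m)))" for r s
    unfolding K_def using skew_P by (intro div_1_sub_uv_inv_div_u_sub_v_closed_form) simp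
  have "mul_u_sub_v (mul_1_sub_uv_inv c C) = skew P \<longleftrightarrow> C = K"
  proof
    assume "mul_u_sub_v (mul_1_sub_uv_inv c C) = skew P"
    then have "mul_u_sub_v (mul_1_sub_uv_inv c C) = mul_u_sub_v (mul_1_sub_uv_inv c K)"
      using K_solves by simp
    then have "mul_1_sub_uv_inv c C = mul_1_sub_uv_inv c K"
      by (rule mul_u_sub_v_inj) (simp add: mul_1_sub_uv_inv_def C K_boundary)
    then show "C = K"
      by (rule mul_1_sub_uv_inv_inj) (simp add: C K_boundary)
  qed (use K_solves in simp)
  also have "C = K \<longleftrightarrow> ?closed"
  proof
    assume "C = K"
    then show ?closed
      using K_closed by simp
  next
    assume closed: ?closed
    show "C = K"
    proof (intro ext)
      fix a b
      show "C a b = K a b"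
      proof (cases "a \<le> 0 \<or> b \<le> 0")
        case True
        then show ?thesis using C K_boundary by simp
      next
        case False
        then have "a = int (nat a)" "b = int (nat b)" "nat a \<ge> 1" "nat b \<ge> 1"
          by auto
        then show ?thesis
          using closed K_closed by metis
      qed
    qed
  qed
  finally show ?thesis .
qed

lemma calg_struct_power:
  assumes "calg_struct sc"
  shows "sc (x ^ m) = sc x ^ m"
proof -
  have "sc 1 = 1" and "\<And>a b. sc (a * b) = sc a * sc b"
    using assms unfolding calg_struct_def by blast+
  then show ?thesis
    by (induction m) simp_all
qed

lemma dickson_relation_entry_iff_closed_form:
  fixes sc :: "complex \<Rightarrow> 'a::ring_1" and t :: "nat \<Rightarrow> nat \<Rightarrow> nat \<Rightarrow> 'a"
  assumes sc: "calg_struct sc"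
  shows "(\<forall>a b. (let C = comm_ser (tc t i j) (tc t k l) in
              mul_u C a b + sc_ser (sc \<beta>) (mul_uinv C) a b - mul_v C a b
                - sc_ser (sc \<beta>) (mul_vinv C) a b)
           = ser_uv (tc t k j) (tc t i l) a b - ser_vu (tc t k j) (tc t i l) a b)
     \<longleftrightarrow> (\<forall>r\<ge>1. \<forall>s\<ge>1.
           commut (t i j r) (t k l s)
           = (\<Sum>(p, m) \<in> {(p, m). m \<le> p + s \<and> p + m + 1 \<le> r}.
                sc (\<beta> ^ m) * (tc t k j (int (r - p - m - 1)) * tc t i l (int (p + s - m))
                              - tc t k j (int (p + s - m)) * tc t i l (int (r - p - m - 1)))))"
    (is "?relation \<longleftrightarrow> ?closed")
proof -
  let ?C = "comm_ser (tc t i j) (tc t k l)" and ?P = "ser_uv (tc t k j) (tc t i l)"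
  have C: "?C a b = 0" if "a \<le> 0 \<or> b \<le> 0" for a b
    using that by (auto simp: comm_ser_def commut_def tc_def)
  have P: "?P a b = 0" if "a < 0 \<or> b < 0" for a b
    using that by (auto simp: ser_uv_def tc_def)
  have C_pos: "?C (int r) (int s) = commut (t i j r) (t k l s)" if "r \<ge> 1" "s \<ge> 1" for r s
    using that by (simp add: comm_ser_def tc_def)
  have "?relation \<longleftrightarrow> mul_u_sub_v (mul_1_sub_uv_inv (sc \<beta>) ?C) = skew ?P"
    by (simp add: dickson_operator_factorization fun_eq_iff skew_def ser_uv_def ser_vu_def)
  also have "\<dots> \<longleftrightarrow> (\<forall>r s. r \<ge> 1 \<longrightarrow> s \<ge> 1 \<longrightarrow> ?C (int r) (int s)
       = (\<Sum>(p, m) \<in> {(p, m). m \<le> p + s \<and> p + m + 1 \<le> r}.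
            sc \<beta> ^ m * skew ?P (int (r - p - m - 1)) (int (p + s - m))))"
    by (rule dickson_relation_iff_closed_form[OF C P])
  also have "\<dots> \<longleftrightarrow> ?closed"
    by (simp add: C_pos calg_struct_power[OF sc] skew_def ser_uv_def)
  finally show ?thesis .
qed

theorem mainTheorem6:
  fixes sc :: "complex \<Rightarrow> 'a::ring_1"
    and \<beta> :: complex and n :: nat
    and t :: "nat \<Rightarrow> nat \<Rightarrow> nat \<Rightarrow> 'a"
  assumes "calg_struct sc" and "n \<ge> 1" and "\<beta> \<noteq> 0"
  shows "(\<forall>i\<in>{1..n}. \<forall>j\<in>{1..n}. \<forall>k\<in>{1..n}. \<forall>l\<in>{1..n}.
           (\<forall>a b. (let C = comm_ser (tc t i j) (tc t k l) in
              mul_u C a b + sc_ser (sc \<beta>) (mul_uinv C) a b - mul_v C a b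
                - sc_ser (sc \<beta>) (mul_vinv C) a b)
           = ser_uv (tc t k j) (tc t i l) a b - ser_vu (tc t k j) (tc t i l) a b))
     \<longleftrightarrow>
         (\<forall>r\<ge>1. \<forall>s\<ge>1. \<forall>i\<in>{1..n}. \<forall>j\<in>{1..n}. \<forall>k\<in>{1..n}. \<forall>l\<in>{1..n}.
           commut (t i j r) (t k l s)
           = (\<Sum>(p, m) \<in> {(p, m). m \<le> p + s \<and> p + m + 1 \<le> r}.
                sc (\<beta> ^ m) * (tc t k j (int (r - p - m - 1)) * tc t i l (int (p + s - m))
                              - tc t k j (int (p + s - m)) * tc t i l (int (r - p - m - 1)))))"
  unfolding dickson_relation_entry_iff_closed_form[OF assms(1)] by blast

end
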